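(* Let \texttt{Mem} be the ABS memory class described in the context. In no reachable state of any valid ABS program that uses (instances of) the class \texttt{Mem} is there a deadlock consisting only of processes running on a single instance of \texttt{Mem}.
   Context: ABS (Abstract Behavioral Specification) is an active object language. Objects communicate only via asynchronous method calls \texttt{f = o!m(args)}: each call creates a new process on the callee object and returns a future \texttt{f}, which the callee resolves with the method's return value when the process terminates. Each object runs at most one process at a time (cooperative scheduling); the active process releases control only by terminating or by suspending at an \texttt{await} statement. \texttt{await b} (b a boolean expression over the object's state) suspends the process until b evaluates to true; \texttt{await f?} suspends until future f is resolved; \texttt{f.get} reads a future and blocks the whole object (no other process of that object may run) until f is resolved. If a class has a method \texttt{Unit run()}, exactly one process executing \texttt{run} is started automatically when the object is created. A process $p_1$ depends on a process $p_2$ if $p_1$ is halted at a \texttt{f.get} or \texttt{await} statement and execution of $p_2$ would allow $p_1$ to continue; a deadlock is a circular dependency between multiple processes. The class \texttt{Mem} (implementing interface \texttt{Memory}) has fields \texttt{mem} (a map from locations to integers), \texttt{list} (a list of pending accesses, each either \texttt{Write(thread, loc, value, id)} or \texttt{Read(thread, loc, id)}), \texttt{counter} (integer), \texttt{done} (set of integers) and \texttt{ret} (map from ids to integers). Its methods are: - \texttt{read(t, loc)}: sets \texttt{myId = counter}, appends \texttt{Read(t, loc, myId)} to \texttt{list}, increments \texttt{counter}, and returns the future of the asynchronous self-call \texttt{this!internalRead(myId)} (no await, no get). - \texttt{internalRead(myId)}: executes \texttt{await contains(done, myId)} and then returns \texttt{lookup(ret, myId)}, with no further side effects. - \texttt{write(t,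 loc, val)}: appends \texttt{Write(t, loc, val, counter)} to \texttt{list} and increments \texttt{counter}. - \texttt{const(i)}: returns \texttt{i}. - \texttt{run()}: an infinite loop whose body executes \texttt{await list != Nil}, then computes (by synchronous local calls to \texttt{strategy}, \texttt{maySwap}, \texttt{getAccess}, \texttt{getValueFor}, which contain no \texttt{await} and no \texttt{get}) an executable access, removes it from \texttt{list}, inserts its id into \texttt{done}, and either updates \texttt{mem} (for a write) or stores the read value in \texttt{ret} (for a read). No method of \texttt{Mem} contains a \texttt{.get} statement, the only \texttt{await} statements are the two boolean-guarded ones in \texttt{run} and \texttt{internalRead}, and \texttt{run} is never called explicitly. *)

theory Defs
  imports Main
begin

text \<open>Threads have type 't, locations type 'l; values and ids are integers.\<close>

datatype ('t, 'l) access = Write 't 'l int int | Read 't 'l int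

fun acc_id :: "('t, 'l) access \<Rightarrow> int" where
  "acc_id (Write t l v i) = i"
| "acc_id (Read t l i) = i"

text \<open>The fields of a Mem object (maps rendered as partial functions).\<close>
record ('t, 'l) fields =
  f_mem :: "'l \<Rightarrow> int option"
  f_list :: "('t, 'l) access list"
  f_counter :: int
  f_done :: "int set"
  f_ret :: "int \<Rightarrow> int option"

text \<open>Process states: method, arguments, program counter and local variables.
  RdP t loc pc myId, WrP t loc val pc, ConstP i pc, IRP myId pc, RunP pc chosenAccess.\<close>
datatype ('t, 'l) pstate =
    RdP 't 'l nat int
  | WrP 't 'l int nat
  | ConstP int nat
  | IRP int nat
  | RunP nat "('t, 'l) access option"

fun at_await :: "('t, 'l) pstate \<Rightarrow> bool" where
  "at_await (RunP 0 a) = True"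
| "at_await (IRP m 0) = True"
| "at_await _ = False"

fun guard :: "('t, 'l) fields \<Rightarrow> ('t, 'l) pstate \<Rightarrow> bool" where
  "guard \<sigma> (RunP 0 a) = (f_list \<sigma> \<noteq> [])"
| "guard \<sigma> (IRP m 0) = (m \<in> f_done \<sigma>)"
| "guard \<sigma> _ = True"

fun pass_await :: "('t, 'l) pstate \<Rightarrow> ('t, 'l) pstate" where
  "pass_await (RunP 0 a) = RunP 1 None"
| "pass_await (IRP m 0) = IRP m 1"
| "pass_await p = p"

text \<open>One statement of an active process:
  lstep \<sigma> p \<sigma>' r s  -- fields change from \<sigma> to \<sigma>', the process continues as r
  (None = terminated), s is a possibly spawned new process (asynchronous self call).
  The synchronous computation of an executable access in run (strategy, maySwap,
  getAccess) is abstracted to a nondeterministic choice among the pending accesses,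
  and getValueFor to a nondeterministic value.\<close>
inductive lstep :: "('t, 'l) fields \<Rightarrow> ('t, 'l) pstate \<Rightarrow> ('t, 'l) fields
    \<Rightarrow> ('t, 'l) pstate option \<Rightarrow> ('t, 'l) pstate option \<Rightarrow> bool" where
  rd0: "lstep \<sigma> (RdP t l 0 m) \<sigma> (Some (RdP t l 1 (f_counter \<sigma>))) None"
| rd1: "lstep \<sigma> (RdP t l 1 m) (\<sigma>\<lparr>f_list := f_list \<sigma> @ [Read t l m]\<rparr>) (Some (RdP t l 2 m)) None"
| rd2: "lstep \<sigma> (RdP t l 2 m) (\<sigma>\<lparr>f_counter := f_counter \<sigma> + 1\<rparr>) (Some (RdP t l 3 m)) None"
| rd3: "lstep \<sigma> (RdP t l 3 m) \<sigma> None (Some (IRP m 0))"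
| wr0: "lstep \<sigma> (WrP t l v 0)
          (\<sigma>\<lparr>f_list := f_list \<sigma> @ [Write t l v (f_counter \<sigma>)]\<rparr>) (Some (WrP t l v 1)) None"
| wr1: "lstep \<sigma> (WrP t l v 1) (\<sigma>\<lparr>f_counter := f_counter \<sigma> + 1\<rparr>) None None"
| cst: "lstep \<sigma> (ConstP i 0) \<sigma> None None"
| ir1: "lstep \<sigma> (IRP m 1) \<sigma> None None"
| run1: "a \<in> set (f_list \<sigma>) \<Longrightarrow> lstep \<sigma> (RunP 1 None) \<sigma> (Some (RunP 2 (Some a))) None"
| run2: "lstep \<sigma> (RunP 2 (Some a)) (\<sigma>\<lparr>f_list := remove1 a (f_list \<sigma>)\<rparr>) (Some (RunP 3 (Some a))) None"
| run3: "lstep \<sigma> (RunP 3 (Some a)) (\<sigma>\<lparr>f_done := insert (acc_id a) (f_done \<sigma>)\<rparr>)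
          (Some (RunP 4 (Some a))) None"
| run4w: "lstep \<sigma> (RunP 4 (Some (Write t l v i))) (\<sigma>\<lparr>f_mem := (f_mem \<sigma>)(l \<mapsto> v)\<rparr>)
          (Some (RunP 0 None)) None"
| run4r: "lstep \<sigma> (RunP 4 (Some (Read t l i))) (\<sigma>\<lparr>f_ret := (f_ret \<sigma>)(i \<mapsto> v)\<rparr>)
          (Some (RunP 0 None)) None"

record ('t, 'l) cfg =
  fs :: "('t, 'l) fields"
  pool :: "nat \<Rightarrow> ('t, 'l) pstate option"
  active :: "nat option"

definition released :: "('t, 'l) pstate option \<Rightarrow> bool" where
  "released r = (case r of None \<Rightarrow> True | Some p \<Rightarrow> at_await p)"

text \<open>Global steps. Calls by the (arbitrary) rest of the program may arrive at any time
  (to read, write, const, and -- over-approximating -- internalRead); run is never called.\<close>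
inductive gstep :: "('t, 'l) cfg \<Rightarrow> ('t, 'l) cfg \<Rightarrow> bool" where
  call: "\<lbrakk> pool c q = None;
           p \<in> {RdP t l 0 0 | t l. True} \<union> {WrP t l v 0 | t l v. True}
               \<union> {ConstP i 0 | i. True} \<union> {IRP m 0 | m. True} \<rbrakk>
         \<Longrightarrow> gstep c (c\<lparr>pool := (pool c)(q \<mapsto> p)\<rparr>)"
| sched: "\<lbrakk> active c = None; pool c q = Some p; \<not> at_await p \<rbrakk>
         \<Longrightarrow> gstep c (c\<lparr>active := Some q\<rparr>)"
| sched_await: "\<lbrakk> active c = None; pool c q = Some p; at_await p; guard (fs c) p \<rbrakk>
         \<Longrightarrow> gstep c (c\<lparr>pool := (pool c)(q \<mapsto> pass_await p), active := Some q\<rparr>)"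
| exec: "\<lbrakk> active c = Some q; pool c q = Some p; lstep (fs c) p \<sigma>' r None \<rbrakk>
         \<Longrightarrow> gstep c \<lparr>fs = \<sigma>', pool = (pool c)(q := r),
                      active = (if released r then None else Some q)\<rparr>"
| exec_spawn: "\<lbrakk> active c = Some q; pool c q = Some p; lstep (fs c) p \<sigma>' r (Some s);
                 pool c q' = None; q' \<noteq> q \<rbrakk>
         \<Longrightarrow> gstep c \<lparr>fs = \<sigma>', pool = (pool c)(q := r, q' \<mapsto> s),
                      active = (if released r then None else Some q)\<rparr>"

definition init_cfg :: "('t, 'l) fields \<Rightarrow> ('t, 'l) cfg" where
  "init_cfg \<sigma>0 = \<lparr>fs = \<sigma>0, pool = [0 \<mapsto> RunP 0 None], active = None\<rparr>"

definition reachable :: "('t, 'l) fields \<Rightarrow> ('t, 'l) cfg \<Rightarrow> bool" where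
  "reachable \<sigma>0 c = gstep\<^sup>*\<^sup>* (init_cfg \<sigma>0) c"

definition halted :: "('t, 'l) cfg \<Rightarrow> nat \<Rightarrow> bool" where
  "halted c q = (\<exists>p. pool c q = Some p \<and> active c \<noteq> Some q \<and> at_await p \<and> \<not> guard (fs c) p)"

inductive hstep :: "('t, 'l) fields \<times> ('t, 'l) pstate option
                   \<Rightarrow> ('t, 'l) fields \<times> ('t, 'l) pstate option \<Rightarrow> bool" where
  "lstep \<sigma> p \<sigma>' r s \<Longrightarrow> hstep (\<sigma>, Some p) (\<sigma>', r)"
| "at_await p \<Longrightarrow> hstep (\<sigma>, Some p) (\<sigma>, Some (pass_await p))"

definition depends :: "('t, 'l) cfg \<Rightarrow> nat \<Rightarrow> nat \<Rightarrow> bool" where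
  "depends c q1 q2 = (q1 \<noteq> q2 \<and> halted c q1 \<and> pool c q2 \<noteq> None \<and>
     (\<exists>\<sigma>' r. hstep\<^sup>*\<^sup>* (fs c, pool c q2) (\<sigma>', r) \<and> guard \<sigma>' (the (pool c q1))))"

definition deadlock :: "('t, 'l) cfg \<Rightarrow> bool" where
  "deadlock c = (\<exists>ps. length ps \<ge> 2 \<and> distinct ps \<and>
     (\<forall>i < length ps. depends c (ps ! i) (ps ! ((i + 1) mod length ps))))"

end

theory Submission
  imports Defs
begin

text \<open>Only the run process changes the fields of the object. A process halted at an await
  is either an internalRead, which never changes the fields, or run waiting on an empty list
  of pending accesses; the latter, once past its await, finds no access to choose and gets
  stuck without having changed anything. So no execution of a halted process can make the
  guard of another halted process true, i.e. nothing depends on a halted process. But in a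
  circular dependency every process is halted, and the first one depends on the second.
  The argument holds in every configuration, reachable or not.\<close>

fun inert :: "('t, 'l) fields \<Rightarrow> ('t, 'l) pstate option \<Rightarrow> bool" where
  "inert \<sigma> None = True"
| "inert \<sigma> (Some (IRP m k)) = (k \<le> 1)"
| "inert \<sigma> (Some (RunP k a)) = (f_list \<sigma> = [] \<and> (k = 0 \<or> k = 1 \<and> a = None))"
| "inert \<sigma> (Some _) = False"

lemma hstep_inert:
  assumes "hstep (\<sigma>, r) (\<sigma>', r')" and "inert \<sigma> r"
  shows "\<sigma>' = \<sigma> \<and> inert \<sigma> r'"
  using assms
proof (cases rule: hstep.cases)
  case (1 p s)
  with assms(2) show ?thesis by (auto elim: lstep.cases)
next
  case (2 p)
  with assms(2) show ?thesis by (cases p rule: at_await.cases) auto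
qed

lemma rtranclp_hstep_inert:
  assumes "hstep\<^sup>*\<^sup>* (\<sigma>, r) (\<sigma>', r')" and "inert \<sigma> r"
  shows "\<sigma>' = \<sigma>"
proof -
  from assms have "\<sigma>' = \<sigma> \<and> inert \<sigma> r'"
    by (induction rule: rtranclp_induct2) (auto dest: hstep_inert)
  then show ?thesis ..
qed

lemma halted_inert:
  assumes "halted c q"
  shows "inert (fs c) (pool c q)"
  using assms unfolding halted_def by (auto elim: at_await.elims)

lemma not_depends_on_halted:
  assumes "halted c q2"
  shows "\<not> depends c q1 q2"
proof
  assume "depends c q1 q2"
  then obtain \<sigma>' r where run_q2: "hstep\<^sup>*\<^sup>* (fs c, pool c q2) (\<sigma>', r)"
    and unblocked: "guard \<sigma>' (the (pool c q1))" and "halted c q1"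
    unfolding depends_def by blast
  from run_q2 halted_inert[OF assms] have "\<sigma>' = fs c"
    by (rule rtranclp_hstep_inert)
  with unblocked \<open>halted c q1\<close> show False
    unfolding halted_def by auto
qed

lemma deadlock_depends_on_halted:
  assumes "deadlock c"
  obtains q1 q2 where "depends c q1 q2" and "halted c q2"
proof -
  from assms obtain ps where len: "length ps \<ge> 2"
    and cycle: "\<forall>i < length ps. depends c (ps ! i) (ps ! ((i + 1) mod length ps))"
    unfolding deadlock_def by blast
  from len have "(0 + 1) mod length ps = 1" and "0 < length ps"
    by auto
  with cycle have "depends c (ps ! 0) (ps ! 1)"
    by metis
  moreover from cycle len have "depends c (ps ! 1) (ps ! ((1 + 1) mod length ps))"
    by auto
  then have "halted c (ps ! 1)"
    unfolding depends_def by blast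
  ultimately show thesis by (rule that)
qed

theorem lemma1:
  fixes \<sigma>0 :: "('t, 'l) fields" and c :: "('t, 'l) cfg"
  assumes "reachable \<sigma>0 c"
  shows "\<not> deadlock c"
  using deadlock_depends_on_halted not_depends_on_halted by metis

end
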